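(* Let $S\subset\mathbb{R}^q$ be compact and $\ell:\mathbb{R}^q\times\mathbb{R}^q\to(0,1)$ continuous. Let $s\in S$, let $(\xi_k)_{k\in\mathbb{N}}\subset\mathbb{R}^q$ be bounded, and let $d_1,d_2,\dots\in\{0,1\}$ be independent random variables with $\Pr(d_k=1)=\ell(s,\xi_k)$. Let $c_1,\dots,c_M\in S$ be distinct, let $\hat p_0:\{1,\dots,M\}\to(0,1)$ with $\sum_i\hat p_0(i)=1$, and define $\hat p_k$ by $$\hat p_k(i\mid d_{1:k};\xi_{1:k})=\frac{g(d_k\mid c_i;\xi_k)\,\hat p_{k-1}(i\mid d_{1:k-1};\xi_{1:k-1})}{\sum_{j=1}^M g(d_k\mid c_j;\xi_k)\,\hat p_{k-1}(j\mid d_{1:k-1};\xi_{1:k-1})},$$ where $g(d\mid x;\xi)=\ell(x,\xi)^d(1-\ell(x,\xi))^{1-d}$. Suppose $c_j=s$ for some $j\in\{1,\dots,M\}$. If for every $i\neq j$ there exists $p>\tfrac12$ such that $$\liminf_{n\to\infty}\frac{1}{n^p}\sum_{k=1}^n\big(\ell(s,\xi_k)-\ell(c_i,\xi_k)\big)^2>0,$$ then $\hat p_k(j\mid d_{1:k};\xi_{1:k})\to 1$ almost surely. *)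

theory Defs
  imports "HOL-Probability.Probability"
begin

definition lik :: "('v \<Rightarrow> 'v \<Rightarrow> real) \<Rightarrow> nat \<Rightarrow> 'v \<Rightarrow> 'v \<Rightarrow> real" where
  "lik l d x \<xi> = l x \<xi> ^ d * (1 - l x \<xi>) ^ (1 - d)"

text \<open>Posterior p_k(i | d_{1:k}; xi_{1:k}); candidates c_1..c_M, prior p0,
  observations d_1, d_2, ... and designs xi_1, xi_2, ... (index 0 unused).\<close>
fun posterior :: "('v \<Rightarrow> 'v \<Rightarrow> real) \<Rightarrow> (nat \<Rightarrow> 'v) \<Rightarrow> nat \<Rightarrow> (nat \<Rightarrow> real)
    \<Rightarrow> (nat \<Rightarrow> 'v) \<Rightarrow> (nat \<Rightarrow> nat) \<Rightarrow> nat \<Rightarrow> nat \<Rightarrow> real" where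
  "posterior l c M p0 \<xi> d 0 i = p0 i"
| "posterior l c M p0 \<xi> d (Suc k) i =
     lik l (d (Suc k)) (c i) (\<xi> (Suc k)) * posterior l c M p0 \<xi> d k i /
     (\<Sum>j=1..M. lik l (d (Suc k)) (c j) (\<xi> (Suc k)) * posterior l c M p0 \<xi> d k j)"

end

theory Submission
  imports Defs "HOL-Real_Asymp.Real_Asymp"
begin

text \<open>Write \<open>L\<^sub>i(n)\<close> for the log-likelihood of candidate \<open>c\<^sub>i\<close> after \<open>n\<close> observations. The posterior
  is the normalised prior times likelihood, so \<open>p\<^sub>n(j) = 1 / \<Sum>\<^sub>i (p\<^sub>0(i) / p\<^sub>0(j)) exp (L\<^sub>i(n) - L\<^sub>j(n))\<close>,
  and it suffices that every \<open>L\<^sub>j(n) - L\<^sub>i(n)\<close>, \<open>i \<noteq> j\<close>, diverges to \<open>+\<infinity>\<close> almost surely.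
  This difference is a sum of independent terms, bounded because \<open>\<ell>\<close> is bounded away from \<open>0\<close> and \<open>1\<close>
  on the compact set of relevant arguments. The mean of the \<open>k\<close>-th term is a Kullback-Leibler
  divergence of Bernoulli laws, at least \<open>(\<ell>(s,\<xi>\<^sub>k) - \<ell>(c\<^sub>i,\<xi>\<^sub>k))\<^sup>2/4\<close>, so the means add up to
  at least a multiple of \<open>n\<^sup>p\<close>. By Hoeffding's inequality the deviation of the sum from its mean
  exceeds \<open>\<epsilon> n\<^sup>p\<close> with probability at most \<open>exp (-C n\<^bsup>2p-1\<^esup>)\<close>, which is summable as \<open>p > 1/2\<close>;
  Borel-Cantelli finishes the argument.\<close>

lemma sqrt_mult_diff_le_mult_ln_diff:
  fixes x y :: real
  assumes "0 < x" "0 < y"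
  shows "2 * (y - sqrt (x * y)) \<le> y * (ln y - ln x)"
proof -
  have "ln x - ln y = 2 * ln (sqrt (x / y))"
    using assms by (simp add: ln_sqrt ln_div)
  also have "\<dots> \<le> 2 * (sqrt (x / y) - 1)"
    using assms ln_le_minus_one[of "sqrt (x / y)"] by simp
  finally have "y * (ln x - ln y) \<le> y * (2 * (sqrt (x / y) - 1))"
    using assms by (intro mult_left_mono) auto
  moreover have "y * sqrt (x / y) = sqrt (x * y)"
    using assms by (simp add: real_sqrt_divide real_sqrt_mult field_simps)
  ultimately show ?thesis
    by (simp add: algebra_simps)
qed

text \<open>The Bernoulli divergence dominates the squared Hellinger distance
  \<open>(\<surd>p - \<surd>q)\<^sup>2 + (\<surd>(1-p) - \<surd>(1-q))\<^sup>2\<close>, which in turn dominates \<open>(p - q)\<^sup>2 / 4\<close>.\<close>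
lemma bernoulli_kl_ge_sq_diff:
  fixes p q :: real
  assumes "0 < p" "p < 1" "0 < q" "q < 1"
  shows "(p - q)\<^sup>2 / 4 \<le> p * (ln p - ln q) + (1 - p) * (ln (1 - p) - ln (1 - q))"
proof -
  define a b c e where "a = sqrt p" and "b = sqrt q" and "c = sqrt (1 - p)" and "e = sqrt (1 - q)"
  have sq: "a\<^sup>2 = p" "b\<^sup>2 = q" "c\<^sup>2 = 1 - p" "e\<^sup>2 = 1 - q"
    using assms by (auto simp: a_def b_def c_def e_def)
  have "2 * (p - a * b) \<le> p * (ln p - ln q)"
    using sqrt_mult_diff_le_mult_ln_diff[of q p] assms by (simp add: a_def b_def real_sqrt_mult mult.commute)
  moreover have "2 * ((1 - p) - c * e) \<le> (1 - p) * (ln (1 - p) - ln (1 - q))"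
    using sqrt_mult_diff_le_mult_ln_diff[of "1 - q" "1 - p"] assms
    by (simp add: c_def e_def real_sqrt_mult mult.commute)
  moreover have "2 * (p - a * b) + 2 * ((1 - p) - c * e) = (a - b)\<^sup>2 + (c - e)\<^sup>2"
    using sq by (simp add: power2_eq_square algebra_simps)
  moreover have "(p - q)\<^sup>2 \<le> 4 * (a - b)\<^sup>2"
  proof -
    have "a \<le> 1" "b \<le> 1" "0 \<le> a" "0 \<le> b"
      using assms by (auto simp: a_def b_def)
    then have "(a + b)\<^sup>2 \<le> 2\<^sup>2"
      by (intro power_mono) auto
    then have "(a - b)\<^sup>2 * (a + b)\<^sup>2 \<le> (a - b)\<^sup>2 * 4"
      by (intro mult_left_mono) auto
    moreover have "(p - q)\<^sup>2 = (a - b)\<^sup>2 * (a + b)\<^sup>2"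
      using sq by (simp add: power2_eq_square algebra_simps)
    ultimately show ?thesis by simp
  qed
  moreover have "0 \<le> (c - e)\<^sup>2"
    by simp
  ultimately show ?thesis
    by linarith
qed

lemma likelihood_bounded_away_from_0_1:
  fixes S K :: "'v::euclidean_space set" and l :: "'v \<Rightarrow> 'v \<Rightarrow> real"
  assumes "compact S" "bounded K"
    and cont: "continuous_on UNIV (\<lambda>(x, y). l x y)"
    and l: "\<And>x y. 0 < l x y \<and> l x y < 1"
  shows "\<exists>a>0. \<forall>x\<in>S. \<forall>y\<in>K. a \<le> l x y \<and> l x y \<le> 1 - a"
proof (cases "S \<times> closure K = {}")
  case True
  then show ?thesis
    by (intro exI[of _ "1/2"]) (auto dest: closure_subset[THEN subsetD])
next
  case False
  define T where "T = (\<lambda>(x, y). l x y) ` (S \<times> closure K)"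
  have "compact T"
    unfolding T_def using assms(1,2)
    by (intro compact_continuous_image continuous_on_subset[OF cont] compact_Times)
       (auto simp: compact_closure)
  moreover have "T \<noteq> {}"
    using False by (simp add: T_def)
  ultimately obtain t0 t1 where "t0 \<in> T" "t1 \<in> T" "\<forall>t\<in>T. t0 \<le> t \<and> t \<le> t1"
    using compact_attains_inf compact_attains_sup by metis
  moreover have "0 < t0" "t1 < 1"
    using \<open>t0 \<in> T\<close> \<open>t1 \<in> T\<close> l by (auto simp: T_def)
  moreover have "l x y \<in> T" if "x \<in> S" "y \<in> K" for x y
    unfolding T_def using that closure_subset by fastforce
  ultimately show ?thesis
  proof (intro exI[of _ "min t0 (1 - t1)"] conjI ballI)
    fix x y assume "x \<in> S" "y \<in> K"
    with \<open>\<forall>t\<in>T. t0 \<le> t \<and> t \<le> t1\<close> \<open>\<And>x y. x \<in> S \<Longrightarrow> y \<in> K \<Longrightarrow> l x y \<in> T\<close>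
    have "t0 \<le> l x y" "l x y \<le> t1"
      by auto
    then show "min t0 (1 - t1) \<le> l x y" "l x y \<le> 1 - min t0 (1 - t1)"
      by linarith+
  qed simp
qed

definition posterior_weight :: "('v \<Rightarrow> 'v \<Rightarrow> real) \<Rightarrow> (nat \<Rightarrow> 'v) \<Rightarrow> (nat \<Rightarrow> real)
    \<Rightarrow> (nat \<Rightarrow> 'v) \<Rightarrow> (nat \<Rightarrow> nat) \<Rightarrow> nat \<Rightarrow> nat \<Rightarrow> real" where
  "posterior_weight l c p0 \<xi> D k i = p0 i * (\<Prod>m=1..k. lik l (D m) (c i) (\<xi> m))"

definition log_lik_ratio :: "('v \<Rightarrow> 'v \<Rightarrow> real) \<Rightarrow> (nat \<Rightarrow> 'v) \<Rightarrow> (nat \<Rightarrow> nat)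
    \<Rightarrow> 'v \<Rightarrow> 'v \<Rightarrow> nat \<Rightarrow> real" where
  "log_lik_ratio l \<xi> D x y n = (\<Sum>m=1..n. ln (lik l (D m) x (\<xi> m)) - ln (lik l (D m) y (\<xi> m)))"

lemma lik_pos:
  assumes "\<And>x y. 0 < l x y \<and> l x y < 1"
  shows "0 < lik l d x y"
  using assms[of x y] by (simp add: lik_def)

lemma posterior_weight_pos:
  assumes "\<And>x y. 0 < l x y \<and> l x y < 1" "0 < p0 i"
  shows "0 < posterior_weight l c p0 \<xi> D k i"
  unfolding posterior_weight_def using assms lik_pos[of l, OF assms(1)]
  by (auto intro!: mult_pos_pos prod_pos)

lemma posterior_weight_Suc:
  "posterior_weight l c p0 \<xi> D (Suc k) i =
     lik l (D (Suc k)) (c i) (\<xi> (Suc k)) * posterior_weight l c p0 \<xi> D k i"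
  unfolding posterior_weight_def by (simp add: prod.cl_ivl_Suc)

lemma posterior_eq_normalized_weight:
  assumes l: "\<And>x y. 0 < l x y \<and> l x y < 1"
    and p0: "\<And>i. i \<in> {1..M} \<Longrightarrow> 0 < p0 i" "(\<Sum>i=1..M. p0 i) = 1"
  shows "posterior l c M p0 \<xi> D k i =
           posterior_weight l c p0 \<xi> D k i / (\<Sum>i'=1..M. posterior_weight l c p0 \<xi> D k i')"
proof (induction k arbitrary: i)
  case 0
  then show ?case
    using p0 by (simp add: posterior_weight_def)
next
  case (Suc k)
  let ?w = "posterior_weight l c p0 \<xi> D k"
  let ?L = "\<lambda>i. lik l (D (Suc k)) (c i) (\<xi> (Suc k))"
  define W where "W = (\<Sum>i'=1..M. ?w i')"
  have "M \<ge> 1"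
    using p0(2) by (cases M) auto
  then have "W > 0"
    unfolding W_def by (intro sum_pos) (auto intro!: posterior_weight_pos[of l, OF l] p0)
  have "posterior l c M p0 \<xi> D (Suc k) i = ?L i * (?w i / W) / (\<Sum>j=1..M. ?L j * (?w j / W))"
    by (simp add: Suc W_def)
  also have "\<dots> = ?L i * ?w i / (\<Sum>j=1..M. ?L j * ?w j)"
    using \<open>W > 0\<close> by (simp add: sum_divide_distrib[symmetric] field_simps)
  finally show ?case
    by (simp add: posterior_weight_Suc)
qed

lemma posterior_weight_ratio:
  assumes "\<And>x y. 0 < l x y \<and> l x y < 1" "0 < p0 j"
  shows "posterior_weight l c p0 \<xi> D n i / posterior_weight l c p0 \<xi> D n j =
           p0 i / p0 j * exp (- log_lik_ratio l \<xi> D (c j) (c i) n)"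
proof -
  have "(\<Prod>m=1..n. lik l (D m) (c x) (\<xi> m)) = exp (\<Sum>m=1..n. ln (lik l (D m) (c x) (\<xi> m)))" for x
    by (simp add: exp_sum lik_pos[of l, OF assms(1)])
  then show ?thesis
    unfolding posterior_weight_def log_lik_ratio_def
    by (simp add: sum_subtractf exp_diff field_simps)
qed

lemma posterior_tendsto_1_if_log_lik_ratio_diverges:
  assumes l: "\<And>x y. 0 < l x y \<and> l x y < 1"
    and p0: "\<And>i. i \<in> {1..M} \<Longrightarrow> 0 < p0 i" "(\<Sum>i=1..M. p0 i) = 1"
    and j: "j \<in> {1..M}"
    and diverges: "\<And>i. i \<in> {1..M} \<Longrightarrow> i \<noteq> j \<Longrightarrow>
      filterlim (log_lik_ratio l \<xi> D (c j) (c i)) at_top sequentially"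
  shows "(\<lambda>k. posterior l c M p0 \<xi> D k j) \<longlonglongrightarrow> 1"
proof -
  define r where "r i n = p0 i / p0 j * exp (- log_lik_ratio l \<xi> D (c j) (c i) n)" for i n
  have "0 < p0 j"
    using p0 j by auto
  have posterior_eq: "posterior l c M p0 \<xi> D n j = 1 / (\<Sum>i=1..M. r i n)" for n
  proof -
    have "(\<Sum>i=1..M. r i n) =
            (\<Sum>i=1..M. posterior_weight l c p0 \<xi> D n i) / posterior_weight l c p0 \<xi> D n j"
      unfolding r_def posterior_weight_ratio[of l p0 j, OF l \<open>0 < p0 j\<close>, symmetric]
      by (simp add: sum_divide_distrib)
    then show ?thesis
      using posterior_eq_normalized_weight[of l, OF l p0] posterior_weight_pos[of l p0 j, OF l \<open>0 < p0 j\<close>]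
      by simp
  qed
  have "r i \<longlonglongrightarrow> (if i = j then 1 else 0)" if "i \<in> {1..M}" for i
  proof (cases "i = j")
    case True
    then show ?thesis
      using \<open>0 < p0 j\<close> unfolding r_def log_lik_ratio_def by simp
  next
    case False
    have "filterlim (\<lambda>n. - log_lik_ratio l \<xi> D (c j) (c i) n) at_bot sequentially"
      using diverges[OF that False] by (simp add: filterlim_uminus_at_bot)
    then have "(\<lambda>n. exp (- log_lik_ratio l \<xi> D (c j) (c i) n)) \<longlonglongrightarrow> 0"
      by (rule filterlim_compose[OF exp_at_bot])
    then have "r i \<longlonglongrightarrow> p0 i / p0 j * 0"
      unfolding r_def by (intro tendsto_mult tendsto_const)
    then show ?thesis
      using False by simp
  qed
  then have "(\<lambda>n. \<Sum>i=1..M. r i n) \<longlonglongrightarrow> (\<Sum>i=1..M. if i = j then 1 else 0)"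
    by (intro tendsto_sum) auto
  then have "(\<lambda>n. \<Sum>i=1..M. r i n) \<longlonglongrightarrow> 1"
    using j by simp
  then show ?thesis
    unfolding posterior_eq using tendsto_divide[OF tendsto_const, of _ 1 sequentially 1] by simp
qed

lemma eventually_powr_less_if_liminf_pos:
  fixes f :: "nat \<Rightarrow> real"
  assumes "0 < liminf (\<lambda>n. ereal (1 / real n powr p * f n))"
  obtains z where "0 < z" "eventually (\<lambda>n. z * real n powr p < f n) sequentially"
proof -
  obtain z where "0 < ereal z" and z: "ereal z < liminf (\<lambda>n. ereal (1 / real n powr p * f n))"
    using ereal_dense2[OF assms] by blast
  have "eventually (\<lambda>n. z < 1 / real n powr p * f n \<and> n \<ge> 1) sequentially"
    using less_LiminfD[OF z] eventually_ge_at_top[of 1] by eventually_elim simp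
  then have "eventually (\<lambda>n. z * real n powr p < f n) sequentially"
  proof eventually_elim
    case (elim n)
    then have "0 < real n powr p" "z < f n / real n powr p"
      by simp_all
    then show ?case
      by (metis pos_less_divide_eq)
  qed
  with \<open>0 < ereal z\<close> show thesis
    using that by simp
qed

lemma (in prob_space) expectation_of_bernoulli:
  fixes D :: "'a \<Rightarrow> nat" and f :: "nat \<Rightarrow> real"
  assumes D: "D \<in> measurable M (count_space UNIV)" "\<And>\<omega>. \<omega> \<in> space M \<Longrightarrow> D \<omega> \<in> {0, 1}"
  shows "expectation (\<lambda>\<omega>. f (D \<omega>)) = f 0 + (f 1 - f 0) * prob {\<omega> \<in> space M. D \<omega> = 1}"
proof -
  define E where "E = {\<omega> \<in> space M. D \<omega> = 1}"
  have "E = D -` {1} \<inter> space M"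
    by (auto simp: E_def)
  then have E: "E \<in> sets M"
    using measurable_sets[OF D(1), of "{1}"] by simp
  have "expectation (\<lambda>\<omega>. f (D \<omega>)) = expectation (\<lambda>\<omega>. f 0 + (f 1 - f 0) * indicator E \<omega>)"
  proof (intro Bochner_Integration.integral_cong refl)
    fix \<omega> assume "\<omega> \<in> space M"
    then show "f (D \<omega>) = f 0 + (f 1 - f 0) * indicator E \<omega>"
      using D(2)[of \<omega>] by (auto simp: E_def indicator_def)
  qed
  also have "\<dots> = f 0 + (f 1 - f 0) * prob E"
    using E by (simp add: prob_space integrable_indicator_iff less_top[symmetric])
  finally show ?thesis
    unfolding E_def .
qed

lemma (in prob_space) prob_sum_le_expectation_minus_powr:
  fixes X :: "nat \<Rightarrow> 'a \<Rightarrow> real"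
  assumes indep: "indep_vars (\<lambda>_. borel) X {1..}"
    and bounded: "\<And>m \<omega>. m \<ge> 1 \<Longrightarrow> \<omega> \<in> space M \<Longrightarrow> \<bar>X m \<omega>\<bar> \<le> L"
    and "0 < L" "0 \<le> \<epsilon>" "n \<ge> 1"
  shows "prob {\<omega> \<in> space M. (\<Sum>m=1..n. X m \<omega>) \<le> (\<Sum>m=1..n. expectation (X m)) - \<epsilon> * real n powr p}
           \<le> exp (- (\<epsilon>\<^sup>2 / (2 * L\<^sup>2)) * real n powr (2 * p - 1))"
proof -
  define \<mu> where "\<mu> = (\<Sum>m=1..n. expectation (X m))"
  interpret Hoeffding_ineq M "{1..n}" X "\<lambda>_. -L" "\<lambda>_. L" \<mu>
  proof unfold_locales
    show "indep_vars (\<lambda>_. borel) X {1..n}"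
      by (rule indep_vars_subset[OF indep]) auto
    show "AE \<omega> in M. X m \<omega> \<in> {-L..L}" if "m \<in> {1..n}" for m
    proof (rule AE_I2)
      fix \<omega> assume "\<omega> \<in> space M"
      then show "X m \<omega> \<in> {-L..L}"
        using bounded[of m \<omega>] that by (auto simp: abs_le_iff)
    qed
  qed (simp_all add: \<mu>_def)
  have "real n > 0"
    using \<open>n \<ge> 1\<close> by simp
  have "-2 * (\<epsilon> * real n powr p)\<^sup>2 / (\<Sum>m\<in>{1..n}. (L - - L)\<^sup>2) =
          - (\<epsilon>\<^sup>2 / (2 * L\<^sup>2)) * real n powr (2 * p - 1)"
  proof -
    have "(real n powr p)\<^sup>2 = real n powr (2 * p)"
      by (simp add: power2_eq_square powr_add[symmetric])
    moreover have "real n powr (2 * p - 1) = real n powr (2 * p) / real n"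
      using \<open>real n > 0\<close> by (simp add: powr_diff)
    ultimately show ?thesis
      using \<open>real n > 0\<close> \<open>0 < L\<close> by (simp add: power_mult_distrib field_simps power2_eq_square)
  qed
  moreover have "prob {\<omega> \<in> space M. (\<Sum>m=1..n. X m \<omega>) \<le> \<mu> - \<epsilon> * real n powr p}
      \<le> exp (-2 * (\<epsilon> * real n powr p)\<^sup>2 / (\<Sum>m\<in>{1..n}. (L - - L)\<^sup>2))"
    using assms by (intro Hoeffding_ineq_le) auto
  ultimately show ?thesis
    by (simp add: \<mu>_def)
qed

lemma (in prob_space) AE_eventually_expectation_minus_powr_less_sum:
  fixes X :: "nat \<Rightarrow> 'a \<Rightarrow> real"
  assumes indep: "indep_vars (\<lambda>_. borel) X {1..}"
    and bounded: "\<And>m \<omega>. m \<ge> 1 \<Longrightarrow> \<omega> \<in> space M \<Longrightarrow> \<bar>X m \<omega>\<bar> \<le> L"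
    and "0 < L" "1/2 < p" "0 < \<epsilon>"
  shows "AE \<omega> in M. eventually (\<lambda>n.
           (\<Sum>m=1..n. expectation (X m)) - \<epsilon> * real n powr p < (\<Sum>m=1..n. X m \<omega>)) sequentially"
proof -
  define C where "C = \<epsilon>\<^sup>2 / (2 * L\<^sup>2)"
  have "0 < C"
    using \<open>0 < L\<close> \<open>0 < \<epsilon>\<close> by (simp add: C_def)
  define A where "A n = {\<omega> \<in> space M.
      (\<Sum>m=1..n. X m \<omega>) \<le> (\<Sum>m=1..n. expectation (X m)) - \<epsilon> * real n powr p}" for n
  have "random_variable borel (X m)" if "m \<in> {1..}" for m
    using indep that unfolding indep_vars_def by blast
  then have [measurable]: "(\<lambda>\<omega>. \<Sum>m=1..n. X m \<omega>) \<in> borel_measurable M" for n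
    by (intro borel_measurable_sum) auto
  have A_sets [measurable]: "A n \<in> sets M" for n
    unfolding A_def by measurable
  have summable_exp: "summable (\<lambda>n. exp (- C * real n powr (2 * p - 1)))"
  proof (rule summable_comparison_test_bigo)
    show "summable (\<lambda>n. norm (1 / real n ^ 2))"
      using inverse_power_summable[of 2, where 'a=real] by (simp add: divide_inverse)
    show "(\<lambda>n. exp (- C * real n powr (2 * p - 1))) \<in> O(\<lambda>n. 1 / real n ^ 2)"
      using \<open>0 < C\<close> \<open>1/2 < p\<close> by real_asymp
  qed
  have prob_A: "prob (A n) \<le> exp (- C * real n powr (2 * p - 1))" if "n \<ge> 1" for n
    using prob_sum_le_expectation_minus_powr[OF indep bounded \<open>0 < L\<close> less_imp_le[OF \<open>0 < \<epsilon>\<close>] that,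
                                              where p = p]
    unfolding A_def C_def .
  have "summable (\<lambda>n. prob (A n))"
    by (rule summable_comparison_test'[OF summable_exp, of 1]) (use prob_A in simp)
  then have "AE \<omega> in M. eventually (\<lambda>n. \<omega> \<in> space M - A n) sequentially"
    by (intro borel_cantelli_AE1) (auto simp: less_top[symmetric])
  then show ?thesis
  proof eventually_elim
    case (elim \<omega>)
    then show ?case
    proof (rule eventually_mono)
      fix n assume "\<omega> \<in> space M - A n"
      then show "(\<Sum>m=1..n. expectation (X m)) - \<epsilon> * real n powr p < (\<Sum>m=1..n. X m \<omega>)"
        by (simp add: A_def not_le)
    qed
  qed
qed

lemma (in prob_space) AE_log_lik_ratio_tendsto_at_top:
  fixes l :: "'v \<Rightarrow> 'v \<Rightarrow> real" and d :: "nat \<Rightarrow> 'a \<Rightarrow> nat" and \<xi> :: "nat \<Rightarrow> 'v"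
  assumes l: "\<And>x y. 0 < l x y \<and> l x y < 1"
    and indep: "indep_vars (\<lambda>_. count_space UNIV) d {1..}"
    and d01: "\<And>k \<omega>. k \<ge> 1 \<Longrightarrow> \<omega> \<in> space M \<Longrightarrow> d k \<omega> \<in> {0, 1}"
    and prob_d: "\<And>k. k \<ge> 1 \<Longrightarrow> prob {\<omega> \<in> space M. d k \<omega> = 1} = l s (\<xi> k)"
    and "0 < a" and a: "\<And>x k. x \<in> {s, u} \<Longrightarrow> a \<le> l x (\<xi> k) \<and> l x (\<xi> k) \<le> 1 - a"
    and "1/2 < p"
    and separated: "0 < liminf (\<lambda>n. ereal (1 / real n powr p * (\<Sum>k=1..n. (l s (\<xi> k) - l u (\<xi> k))\<^sup>2)))"
  shows "AE \<omega> in M. filterlim (log_lik_ratio l \<xi> (\<lambda>k. d k \<omega>) s u) at_top sequentially"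
proof -
  define Y where "Y m = (\<lambda>\<omega>. ln (lik l (d m \<omega>) s (\<xi> m)) - ln (lik l (d m \<omega>) u (\<xi> m)))" for m
  define \<delta> where "\<delta> k = (l s (\<xi> k) - l u (\<xi> k))\<^sup>2" for k
  have d_rv: "d m \<in> measurable M (count_space UNIV)" if "m \<ge> 1" for m
    using indep that unfolding indep_vars_def by auto
  have "a < 1"
    using a[of s 0] \<open>0 < a\<close> by auto
  have ln_lik_bounded: "ln a \<le> ln (lik l t x (\<xi> m)) \<and> ln (lik l t x (\<xi> m)) \<le> 0"
    if "t \<in> {0, 1}" "x \<in> {s, u}" for t x m
    using that a[of x m] l[of x "\<xi> m"] \<open>0 < a\<close> by (auto simp: lik_def)
  have Y_bounded: "\<bar>Y m \<omega>\<bar> \<le> - ln a" if "m \<ge> 1" "\<omega> \<in> space M" for m \<omega>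
    using ln_lik_bounded[OF d01[OF that], of s m] ln_lik_bounded[OF d01[OF that], of u m]
    unfolding Y_def by (simp add: abs_le_iff)
  have "0 < - ln a"
    using \<open>0 < a\<close> \<open>a < 1\<close> by simp
  have "indep_vars (\<lambda>_. borel) Y {1..}"
    unfolding Y_def by (rule indep_vars_compose2[OF indep]) auto
  have expectation_Y: "\<delta> m / 4 \<le> expectation (Y m)" if "m \<ge> 1" for m
  proof -
    define g where "g t = ln (lik l t s (\<xi> m)) - ln (lik l t u (\<xi> m))" for t
    have "expectation (Y m) = g 0 + (g 1 - g 0) * l s (\<xi> m)"
      using expectation_of_bernoulli[OF d_rv[OF that] d01[OF that], of g] prob_d[OF that]
      by (simp add: Y_def g_def)
    also have "\<dots> = l s (\<xi> m) * (ln (l s (\<xi> m)) - ln (l u (\<xi> m))) +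
                     (1 - l s (\<xi> m)) * (ln (1 - l s (\<xi> m)) - ln (1 - l u (\<xi> m)))"
      by (simp add: g_def lik_def algebra_simps)
    finally show ?thesis
      using bernoulli_kl_ge_sq_diff[of "l s (\<xi> m)" "l u (\<xi> m)"] l[of s "\<xi> m"] l[of u "\<xi> m"]
      unfolding \<delta>_def by linarith
  qed
  obtain z where "0 < z" and z: "eventually (\<lambda>n. z * real n powr p < (\<Sum>k=1..n. \<delta> k)) sequentially"
    using eventually_powr_less_if_liminf_pos[of p "\<lambda>n. \<Sum>k=1..n. \<delta> k"] separated
    unfolding \<delta>_def by blast
  have "AE \<omega> in M. eventually (\<lambda>n.
          (\<Sum>m=1..n. expectation (Y m)) - z / 8 * real n powr p < (\<Sum>m=1..n. Y m \<omega>)) sequentially"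
    using \<open>0 < z\<close> AE_eventually_expectation_minus_powr_less_sum
      [OF \<open>indep_vars (\<lambda>_. borel) Y {1..}\<close> Y_bounded \<open>0 < - ln a\<close> \<open>1/2 < p\<close>, of "z / 8"]
    by simp
  then show ?thesis
  proof eventually_elim
    case (elim \<omega>)
    have "eventually (\<lambda>n. z / 8 * real n powr p \<le> log_lik_ratio l \<xi> (\<lambda>k. d k \<omega>) s u n) sequentially"
      using elim z
    proof eventually_elim
      case (elim n)
      have "(\<Sum>m=1..n. \<delta> m) / 4 \<le> (\<Sum>m=1..n. expectation (Y m))"
        unfolding sum_divide_distrib by (intro sum_mono expectation_Y) auto
      with elim show ?case
        unfolding log_lik_ratio_def Y_def by linarith
    qed
    moreover have "filterlim (\<lambda>n. z / 8 * real n powr p) at_top sequentially"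
      using \<open>0 < z\<close> \<open>1/2 < p\<close> by real_asymp
    ultimately show ?case
      by (rule filterlim_at_top_mono[rotated])
  qed
qed

theorem theorem3:
  fixes S :: "'v::euclidean_space set" and l :: "'v \<Rightarrow> 'v \<Rightarrow> real"
    and s :: 'v and \<xi> :: "nat \<Rightarrow> 'v"
    and P :: "'a measure" and d :: "nat \<Rightarrow> 'a \<Rightarrow> nat"
    and c :: "nat \<Rightarrow> 'v" and M :: nat and p0 :: "nat \<Rightarrow> real" and j :: nat
  assumes "compact S"
    and "continuous_on UNIV (\<lambda>(x, y). l x y)"
    and "\<And>x y. 0 < l x y \<and> l x y < 1"
    and "s \<in> S"
    and "bounded (range \<xi>)"
    and "prob_space P"
    and "prob_space.indep_vars P (\<lambda>_. count_space UNIV) d {1..}"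
    and "\<And>k \<omega>. k \<ge> 1 \<Longrightarrow> \<omega> \<in> space P \<Longrightarrow> d k \<omega> \<in> {0, 1}"
    and "\<And>k. k \<ge> 1 \<Longrightarrow> measure P {\<omega> \<in> space P. d k \<omega> = 1} = l s (\<xi> k)"
    and "\<And>i. i \<in> {1..M} \<Longrightarrow> c i \<in> S"
    and "inj_on c {1..M}"
    and "\<And>i. i \<in> {1..M} \<Longrightarrow> 0 < p0 i \<and> p0 i < 1"
    and "(\<Sum>i=1..M. p0 i) = 1"
    and "j \<in> {1..M}" and "c j = s"
    and "\<And>i. i \<in> {1..M} \<Longrightarrow> i \<noteq> j \<Longrightarrow>
           (\<exists>p::real. p > 1/2 \<and>
              liminf (\<lambda>n. ereal ((1 / real n powr p) *
                 (\<Sum>k=1..n. (l s (\<xi> k) - l (c i) (\<xi> k))\<^sup>2))) > 0)"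
  shows "AE \<omega> in P. (\<lambda>k. posterior l c M p0 \<xi> (\<lambda>k. d k \<omega>) k j) \<longlonglongrightarrow> 1"
proof -
  interpret prob_space P by fact
  obtain a where "0 < a" and a: "\<forall>x\<in>S. \<forall>y\<in>range \<xi>. a \<le> l x y \<and> l x y \<le> 1 - a"
    using likelihood_bounded_away_from_0_1[OF assms(1,5,2,3)] by blast
  have diverges: "AE \<omega> in P. filterlim (log_lik_ratio l \<xi> (\<lambda>k. d k \<omega>) (c j) (c i)) at_top sequentially"
    if i: "i \<in> {1..M}" "i \<noteq> j" for i
  proof -
    have l_bounded: "a \<le> l x (\<xi> k) \<and> l x (\<xi> k) \<le> 1 - a" if "x \<in> {s, c i}" for x k
      using that a assms(4,10) \<open>i \<in> {1..M}\<close> by auto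
    obtain p where p: "1/2 < p"
      and separated: "0 < liminf (\<lambda>n. ereal (1 / real n powr p *
                          (\<Sum>k=1..n. (l s (\<xi> k) - l (c i) (\<xi> k))\<^sup>2)))"
      using assms(16)[OF i] by blast
    show ?thesis
      using AE_log_lik_ratio_tendsto_at_top[of l, OF assms(3,7-9) \<open>0 < a\<close> l_bounded p separated]
      unfolding \<open>c j = s\<close> .
  qed
  have "AE \<omega> in P. \<forall>i\<in>{1..M} - {j}.
      filterlim (log_lik_ratio l \<xi> (\<lambda>k. d k \<omega>) (c j) (c i)) at_top sequentially"
    by (rule AE_ball_countable') (use diverges in auto)
  then show ?thesis
  proof eventually_elim
    case (elim \<omega>)
    show ?case
      by (rule posterior_tendsto_1_if_log_lik_ratio_diverges[of l])
         (use assms(3,12-14) elim in auto)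
  qed
qed

end
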